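(* Let $T$ be the semi-infinite matrix $T_{jk}=\binom{j+k}{j}$, $j,k\in\mathbb N$. Let $J$ and $\widetilde J$ be the semi-infinite symmetric tridiagonal matrices with diagonal entries $J_{nn}=b_n$, $\widetilde J_{nn}=\beta_n$ and off-diagonal entries $J_{n-1,n}=J_{n,n-1}=a_n$, $\widetilde J_{n-1,n}=\widetilde J_{n,n-1}=\alpha_n$ ($n\ge1$), all other entries zero, where $$a_n=n,\quad b_n=-n,\quad \alpha_n=n^3,\quad \beta_n=-2n^3-3n^2-2n.$$ Then $TJ=JT$ and $T\widetilde J=\widetilde JT$.
   Context: Matrix indices start at $0$; products of a semi-infinite band matrix with $T$ are finite sums entrywise. *)

theory Defs
  imports Main
begin

type_synonym imat = "nat \<Rightarrow> nat \<Rightarrow> int"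

text \<open>Product of semi-infinite matrices, defined entrywise as the sum over the
  (finite, when one factor is banded) set of indices where the summand is nonzero.\<close>
definition mmult :: "imat \<Rightarrow> imat \<Rightarrow> imat" where
  "mmult A B = (\<lambda>j k. \<Sum>l | A j l * B l k \<noteq> 0. A j l * B l k)"

definition Tmat :: imat where
  "Tmat j k = int ((j + k) choose j)"

definition tridiag :: "(nat \<Rightarrow> int) \<Rightarrow> (nat \<Rightarrow> int) \<Rightarrow> imat" where
  "tridiag d off = (\<lambda>j k. if j = k then d j
      else if k = j + 1 then off k
      else if j = k + 1 then off j
      else 0)"

definition Jmat :: imat where
  "Jmat = tridiag (\<lambda>n. - int n) (\<lambda>n. int n)"

definition Jtilde :: imat where
  "Jtilde = tridiag (\<lambda>n. - 2 * int n ^ 3 - 3 * int n ^ 2 - 2 * int n) (\<lambda>n. int n ^ 3)"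

end

theory Submission
  imports Defs
begin

text \<open>Write the off-diagonal of a tridiagonal matrix as \<open>n * p n\<close>. The neighbours of
  \<open>T j k = (j+k choose j)\<close> are multiples of it: \<open>(k+1) T j (k+1) = (j+k+1) T j k\<close> and
  \<open>(j+k) T j (k-1) = k T j k\<close>, and symmetrically in \<open>j\<close>. After multiplying by \<open>j + k\<close>,
  both \<open>(TJ) j k\<close> and \<open>(JT) j k\<close> become \<open>T j k\<close> times a polynomial in \<open>j, k\<close>, so
  commutation reduces to a polynomial identity in the diagonal \<open>d\<close> and in \<open>p\<close>; it holds
  for \<open>p = 1, d n = -n\<close> and for \<open>p n = n\<^sup>2, d n = -2n\<^sup>3-3n\<^sup>2-2n\<close>.\<close>

lemma mmult_eq_sum:
  assumes "finite S" and "\<And>l. A j l * B l k \<noteq> 0 \<Longrightarrow> l \<in> S"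
  shows "mmult A B j k = (\<Sum>l\<in>S. A j l * B l k)"
  unfolding mmult_def using assms by (intro sum.mono_neutral_left) auto

lemma mmult_tridiag_right:
  assumes "off 0 = 0"
  shows "mmult A (tridiag d off) j k =
    A j k * d k + A j (Suc k) * off (Suc k) + A j (k - 1) * off k"
proof (cases k)
  case 0
  have "mmult A (tridiag d off) j k = (\<Sum>l\<in>{0, 1}. A j l * tridiag d off l k)"
    by (rule mmult_eq_sum) (auto simp: tridiag_def 0 split: if_splits)
  then show ?thesis using assms 0 by (simp add: tridiag_def)
next
  case (Suc m)
  have "mmult A (tridiag d off) j k = (\<Sum>l\<in>{m, Suc m, Suc (Suc m)}. A j l * tridiag d off l k)"
    by (rule mmult_eq_sum) (auto simp: tridiag_def Suc split: if_splits)
  then show ?thesis using Suc by (simp add: tridiag_def algebra_simps)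
qed

lemma mmult_tridiag_left:
  assumes "off 0 = 0"
  shows "mmult (tridiag d off) A j k =
    d j * A j k + off (Suc j) * A (Suc j) k + off j * A (j - 1) k"
proof (cases j)
  case 0
  have "mmult (tridiag d off) A j k = (\<Sum>l\<in>{0, 1}. tridiag d off j l * A l k)"
    by (rule mmult_eq_sum) (auto simp: tridiag_def 0 split: if_splits)
  then show ?thesis using assms 0 by (simp add: tridiag_def)
next
  case (Suc m)
  have "mmult (tridiag d off) A j k = (\<Sum>l\<in>{m, Suc m, Suc (Suc m)}. tridiag d off j l * A l k)"
    by (rule mmult_eq_sum) (auto simp: tridiag_def Suc split: if_splits)
  then show ?thesis using Suc by (simp add: tridiag_def algebra_simps)
qed

lemma Tmat_symmetric: "Tmat j k = Tmat k j"
  unfolding Tmat_def by (metis add.commute binomial_symmetric le_add1 add_diff_cancel_left')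

lemma Tmat_Suc_left: "int (Suc j) * Tmat (Suc j) k = int (Suc (j + k)) * Tmat j k"
proof -
  have "Suc j * (Suc j + k choose Suc j) = Suc (j + k) * (j + k choose j)"
    using Suc_times_binomial_eq[of "j + k" j] by simp
  then show ?thesis unfolding Tmat_def by (metis of_nat_mult)
qed

lemma Tmat_Suc_right: "int (Suc k) * Tmat j (Suc k) = int (Suc (j + k)) * Tmat j k"
  using Tmat_Suc_left[of k j] by (simp add: Tmat_symmetric add.commute)

text \<open>The factor \<open>j\<close> makes the identity true at \<open>j = 0\<close>, where \<open>j - 1\<close> truncates to \<open>0\<close>.\<close>

lemma Tmat_pred_left: "int j * (int (j + k) * Tmat (j - 1) k) = int j * (int j * Tmat j k)"
proof (cases j)
  case (Suc i)
  then show ?thesis using Tmat_Suc_left[of i k] by simp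
qed simp

lemma Tmat_pred_right: "int k * (int (j + k) * Tmat j (k - 1)) = int k * (int k * Tmat j k)"
  using Tmat_pred_left[of k j] by (simp add: Tmat_symmetric add.commute)

lemma mmult_Tmat_tridiag_scaled:
  fixes d p :: "nat \<Rightarrow> int"
  shows "int (j + k) * mmult Tmat (tridiag d (\<lambda>n. int n * p n)) j k =
    Tmat j k * (int (j + k) * d k + int (j + k) * int (Suc (j + k)) * p (Suc k) + int k ^ 2 * p k)"
proof -
  have "int (j + k) * mmult Tmat (tridiag d (\<lambda>n. int n * p n)) j k =
      int (j + k) * Tmat j k * d k + int (j + k) * p (Suc k) * (int (Suc k) * Tmat j (Suc k))
      + p k * (int k * (int (j + k) * Tmat j (k - 1)))"
    by (simp add: mmult_tridiag_right algebra_simps)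
  also have "\<dots> = Tmat j k * (int (j + k) * d k + int (j + k) * int (Suc (j + k)) * p (Suc k) + int k ^ 2 * p k)"
    by (simp only: Tmat_Suc_right Tmat_pred_right) (simp add: algebra_simps power2_eq_square)
  finally show ?thesis .
qed

lemma mmult_tridiag_Tmat_scaled:
  fixes d p :: "nat \<Rightarrow> int"
  shows "int (j + k) * mmult (tridiag d (\<lambda>n. int n * p n)) Tmat j k =
    Tmat j k * (int (j + k) * d j + int (j + k) * int (Suc (j + k)) * p (Suc j) + int j ^ 2 * p j)"
proof -
  have "int (j + k) * mmult (tridiag d (\<lambda>n. int n * p n)) Tmat j k =
      int (j + k) * Tmat j k * d j + int (j + k) * p (Suc j) * (int (Suc j) * Tmat (Suc j) k)
      + p j * (int j * (int (j + k) * Tmat (j - 1) k))"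
    by (simp add: mmult_tridiag_left algebra_simps)
  also have "\<dots> = Tmat j k * (int (j + k) * d j + int (j + k) * int (Suc (j + k)) * p (Suc j) + int j ^ 2 * p j)"
    by (simp only: Tmat_Suc_left Tmat_pred_left) (simp add: algebra_simps power2_eq_square)
  finally show ?thesis .
qed

lemma Tmat_commutes_tridiag:
  fixes d p :: "nat \<Rightarrow> int"
  assumes balance: "\<And>j k. int (j + k) * (d k - d j + int (Suc (j + k)) * (p (Suc k) - p (Suc j)))
      + int k ^ 2 * p k - int j ^ 2 * p j = 0"
  shows "mmult Tmat (tridiag d (\<lambda>n. int n * p n)) = mmult (tridiag d (\<lambda>n. int n * p n)) Tmat"
proof (intro ext)
  fix j k
  let ?J = "tridiag d (\<lambda>n. int n * p n)"
  show "mmult Tmat ?J j k = mmult ?J Tmat j k"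
  proof (cases "j + k = 0")
    case True
    then show ?thesis by (simp add: mmult_tridiag_left mmult_tridiag_right Tmat_def)
  next
    case False
    have "int (j + k) * mmult Tmat ?J j k - int (j + k) * mmult ?J Tmat j k = 0"
      unfolding mmult_Tmat_tridiag_scaled mmult_tridiag_Tmat_scaled
      using balance[of j k] by (simp add: algebra_simps)
    moreover have "int (j + k) \<noteq> 0" using False by linarith
    ultimately show ?thesis by simp
  qed
qed

theorem theorem3p1:
  shows "mmult Tmat Jmat = mmult Jmat Tmat \<and> mmult Tmat Jtilde = mmult Jtilde Tmat"
proof
  have Jmat_eq: "Jmat = tridiag (\<lambda>n. - int n) (\<lambda>n. int n * 1)"
    unfolding Jmat_def by simp
  show "mmult Tmat Jmat = mmult Jmat Tmat"
    unfolding Jmat_eq by (rule Tmat_commutes_tridiag) (simp add: algebra_simps power2_eq_square)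
next
  have Jtilde_eq: "Jtilde = tridiag (\<lambda>n. - 2 * int n ^ 3 - 3 * int n ^ 2 - 2 * int n) (\<lambda>n. int n * int n ^ 2)"
    unfolding Jtilde_def by (simp add: power2_eq_square power3_eq_cube mult.assoc)
  show "mmult Tmat Jtilde = mmult Jtilde Tmat"
    unfolding Jtilde_eq by (rule Tmat_commutes_tridiag) (simp add: algebra_simps power2_eq_square power3_eq_cube)
qed

end
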